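(* Let $G$ be a Lie group, $M$ a smooth manifold, $\Phi : G\times M\to M$ a smooth left action, and $\phi : \mathbb{R}\times M\to M$ a flow. Then the following are equivalent: (i) for every $t\in\mathbb{R}$, the diffeomorphism $\phi_t$ is weakly $\Phi$-invariant; (ii) there exists $\varepsilon>0$ such that for every $t\in(-\varepsilon,\varepsilon)$, $\phi_t$ is weakly $\Phi$-invariant.
   Context: A flow is a smooth map $\phi:\mathbb{R}\times M\to M$ with $\phi_{t_1+t_2} = \phi_{t_1}\circ\phi_{t_2}$ and $\phi_0 = \mathrm{id}_M$. A diffeomorphism $f : M\to M$ is weakly $\Phi$-invariant if there exists a map $\sigma : G\to G$ such that $f = \Phi_{\sigma(g)^{-1}}\circ f\circ\Phi_g$ for all $g\in G$, where $\Phi_g = \Phi(g,\cdot)$. *)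

theory Defs
  imports "HOL-Analysis.Analysis" "HOL-Algebra.Group"
begin

fun iter_dd :: "('a::euclidean_space \<Rightarrow> 'b::real_normed_vector) \<Rightarrow> 'a list \<Rightarrow> 'a \<Rightarrow> 'b" where
  "iter_dd f [] = f"
| "iter_dd f (v # vs) = (\<lambda>x. frechet_derivative (iter_dd f vs) (at x) v)"

definition smooth_on :: "'a::euclidean_space set \<Rightarrow> ('a \<Rightarrow> 'b::euclidean_space) \<Rightarrow> bool" where
  "smooth_on U f \<longleftrightarrow> open U \<and>
     (\<forall>vs. continuous_on U (iter_dd f vs) \<and> (\<forall>x\<in>U. iter_dd f vs differentiable (at x)))"

definition is_chart :: "('m::topological_space set \<times> ('m \<Rightarrow> 'e::euclidean_space)) \<Rightarrow> bool" where
  "is_chart Uc \<longleftrightarrow> (case Uc of (U, c) \<Rightarrow>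
      open U \<and> open (c ` U) \<and> homeomorphism U (c ` U) c (inv_into U c))"

definition smooth_atlas :: "('m::topological_space set \<times> ('m \<Rightarrow> 'e::euclidean_space)) set \<Rightarrow> bool" where
  "smooth_atlas A \<longleftrightarrow> (\<forall>Uc\<in>A. is_chart Uc) \<and> (\<Union>(fst ` A) = UNIV) \<and>
     (\<forall>(U, c)\<in>A. \<forall>(V, d)\<in>A. smooth_on (c ` (U \<inter> V)) (d \<circ> inv_into U c))"

text \<open>A smooth manifold: Hausdorff, second countable (type classes) with a smooth atlas.\<close>
definition smooth_manifold :: "('m::{t2_space, second_countable_topology} set \<times> ('m \<Rightarrow> 'e::euclidean_space)) set \<Rightarrow> bool" where
  "smooth_manifold A \<longleftrightarrow> smooth_atlas A"

definition smooth_map ::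
  "('m::topological_space set \<times> ('m \<Rightarrow> 'e::euclidean_space)) set \<Rightarrow>
   ('n::topological_space set \<times> ('n \<Rightarrow> 'f::euclidean_space)) set \<Rightarrow> ('m \<Rightarrow> 'n) \<Rightarrow> bool" where
  "smooth_map A B f \<longleftrightarrow> continuous_on UNIV f \<and>
     (\<forall>(U, c)\<in>A. \<forall>(V, d)\<in>B. smooth_on (c ` (U \<inter> f -` V)) (d \<circ> f \<circ> inv_into U c))"

definition prod_atlas ::
  "('m set \<times> ('m \<Rightarrow> 'e)) set \<Rightarrow> ('n set \<times> ('n \<Rightarrow> 'f)) set \<Rightarrow>
   (('m \<times> 'n) set \<times> ('m \<times> 'n \<Rightarrow> 'e \<times> 'f)) set" where
  "prod_atlas A B = {(U \<times> V, \<lambda>(x, y). (c x, d y)) | U c V d. (U, c) \<in> A \<and> (V, d) \<in> B}"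

definition real_atlas :: "(real set \<times> (real \<Rightarrow> real)) set" where
  "real_atlas = {(UNIV, id)}"

definition diffeomorphism ::
  "('m::topological_space set \<times> ('m \<Rightarrow> 'e::euclidean_space)) set \<Rightarrow> ('m \<Rightarrow> 'm) \<Rightarrow> bool" where
  "diffeomorphism A f \<longleftrightarrow> bij f \<and> smooth_map A A f \<and> smooth_map A A (Hilbert_Choice.inv f)"

definition lie_group ::
  "('g::{t2_space, second_countable_topology}, 'z) monoid_scheme \<Rightarrow>
   ('g set \<times> ('g \<Rightarrow> 'e::euclidean_space)) set \<Rightarrow> bool" where
  "lie_group G AG \<longleftrightarrow> group G \<and> carrier G = UNIV \<and> smooth_manifold AG \<and>
     smooth_map (prod_atlas AG AG) AG (\<lambda>(a, b). a \<otimes>\<^bsub>G\<^esub> b) \<and>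
     smooth_map AG AG (\<lambda>a. inv\<^bsub>G\<^esub> a)"

definition smooth_left_action ::
  "('g, 'z) monoid_scheme \<Rightarrow> ('g::topological_space set \<times> ('g \<Rightarrow> 'e::euclidean_space)) set \<Rightarrow>
   ('m::topological_space set \<times> ('m \<Rightarrow> 'f::euclidean_space)) set \<Rightarrow> ('g \<Rightarrow> 'm \<Rightarrow> 'm) \<Rightarrow> bool" where
  "smooth_left_action G AG AM \<Phi> \<longleftrightarrow>
     smooth_map (prod_atlas AG AM) AM (\<lambda>(g, x). \<Phi> g x) \<and>
     (\<forall>x. \<Phi> \<one>\<^bsub>G\<^esub> x = x) \<and>
     (\<forall>g h x. \<Phi> (g \<otimes>\<^bsub>G\<^esub> h) x = \<Phi> g (\<Phi> h x))"

definition is_flow ::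
  "('m::topological_space set \<times> ('m \<Rightarrow> 'f::euclidean_space)) set \<Rightarrow> (real \<Rightarrow> 'm \<Rightarrow> 'm) \<Rightarrow> bool" where
  "is_flow AM \<phi> \<longleftrightarrow> smooth_map (prod_atlas real_atlas AM) AM (\<lambda>(t, x). \<phi> t x) \<and>
     (\<forall>s t. \<phi> (s + t) = \<phi> s \<circ> \<phi> t) \<and> \<phi> 0 = id"

definition weakly_invariant ::
  "('g, 'z) monoid_scheme \<Rightarrow> ('g \<Rightarrow> 'm \<Rightarrow> 'm) \<Rightarrow> ('m \<Rightarrow> 'm) \<Rightarrow> bool" where
  "weakly_invariant G \<Phi> f \<longleftrightarrow>
     (\<exists>\<sigma>. (\<forall>g\<in>carrier G. \<sigma> g \<in> carrier G) \<and>
          (\<forall>g\<in>carrier G. f = \<Phi> (inv\<^bsub>G\<^esub> (\<sigma> g)) \<circ> f \<circ> \<Phi> g))"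

end

theory Submission
  imports Defs
begin

text \<open>Weakly invariant maps are exactly the maps f intertwining the action up to a reparametrisation
  \<sigma> of the group, f (\<Phi> g x) = \<Phi> (\<sigma> g) (f x); in this form they are evidently closed under
  composition. Hence all flow maps \<phi> (n s) = (\<phi> s)^n are weakly invariant once the \<phi> s with
  |s| < \<epsilon> are, and every time t is such a multiple n s.\<close>

locale left_action = group G for G (structure) and \<Phi> :: "'g \<Rightarrow> 'm \<Rightarrow> 'm" +
  assumes action_one: "\<Phi> \<one> x = x"
    and action_mult: "g \<in> carrier G \<Longrightarrow> h \<in> carrier G \<Longrightarrow> \<Phi> (g \<otimes> h) x = \<Phi> g (\<Phi> h x)"
begin

lemma action_inv_cancel: "g \<in> carrier G \<Longrightarrow> \<Phi> (inv g) (\<Phi> g x) = x"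
  by (simp flip: action_mult add: action_one)

lemma weakly_invariant_iff_intertwines:
  "weakly_invariant G \<Phi> f \<longleftrightarrow>
     (\<exists>\<sigma>. \<sigma> \<in> carrier G \<rightarrow> carrier G \<and> (\<forall>g\<in>carrier G. \<forall>x. f (\<Phi> g x) = \<Phi> (\<sigma> g) (f x)))"
proof
  assume "weakly_invariant G \<Phi> f"
  then obtain \<sigma> where \<sigma>: "\<And>g. g \<in> carrier G \<Longrightarrow> \<sigma> g \<in> carrier G"
    and inv: "\<And>g. g \<in> carrier G \<Longrightarrow> f = \<Phi> (inv (\<sigma> g)) \<circ> f \<circ> \<Phi> g"
    unfolding weakly_invariant_def by blast
  have "f (\<Phi> g x) = \<Phi> (\<sigma> g) (f x)" if g: "g \<in> carrier G" for g x
  proof -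
    have "\<Phi> (\<sigma> g) (f x) = \<Phi> (\<sigma> g) (\<Phi> (inv (\<sigma> g)) (f (\<Phi> g x)))"
      using inv[OF g] by (metis comp_apply)
    also have "\<dots> = f (\<Phi> g x)"
      using action_inv_cancel[of "inv (\<sigma> g)"] \<sigma>[OF g] by simp
    finally show ?thesis by simp
  qed
  with \<sigma> show "\<exists>\<sigma>. \<sigma> \<in> carrier G \<rightarrow> carrier G \<and> (\<forall>g\<in>carrier G. \<forall>x. f (\<Phi> g x) = \<Phi> (\<sigma> g) (f x))"
    by blast
next
  assume "\<exists>\<sigma>. \<sigma> \<in> carrier G \<rightarrow> carrier G \<and> (\<forall>g\<in>carrier G. \<forall>x. f (\<Phi> g x) = \<Phi> (\<sigma> g) (f x))"
  then obtain \<sigma> where \<sigma>: "\<sigma> \<in> carrier G \<rightarrow> carrier G"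
    and intertwines: "\<And>g x. g \<in> carrier G \<Longrightarrow> f (\<Phi> g x) = \<Phi> (\<sigma> g) (f x)"
    by blast
  have "f = \<Phi> (inv (\<sigma> g)) \<circ> f \<circ> \<Phi> g" if "g \<in> carrier G" for g
  proof
    fix x
    have "\<sigma> g \<in> carrier G"
      using \<sigma> that by blast
    then show "f x = (\<Phi> (inv (\<sigma> g)) \<circ> f \<circ> \<Phi> g) x"
      by (simp add: intertwines[OF that] action_inv_cancel)
  qed
  with \<sigma> show "weakly_invariant G \<Phi> f"
    unfolding weakly_invariant_def by blast
qed

lemma weakly_invariant_id: "weakly_invariant G \<Phi> id"
  unfolding weakly_invariant_iff_intertwines by (intro exI[of _ "\<lambda>g. g"]) auto

lemma weakly_invariant_comp:
  assumes "weakly_invariant G \<Phi> f" and "weakly_invariant G \<Phi> h"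
  shows "weakly_invariant G \<Phi> (f \<circ> h)"
proof -
  obtain \<sigma> where \<sigma>: "\<sigma> \<in> carrier G \<rightarrow> carrier G"
    and f: "\<And>g x. g \<in> carrier G \<Longrightarrow> f (\<Phi> g x) = \<Phi> (\<sigma> g) (f x)"
    using assms(1) unfolding weakly_invariant_iff_intertwines by blast
  obtain \<tau> where \<tau>: "\<tau> \<in> carrier G \<rightarrow> carrier G"
    and h: "\<And>g x. g \<in> carrier G \<Longrightarrow> h (\<Phi> g x) = \<Phi> (\<tau> g) (h x)"
    using assms(2) unfolding weakly_invariant_iff_intertwines by blast
  have "(f \<circ> h) (\<Phi> g x) = \<Phi> ((\<sigma> \<circ> \<tau>) g) ((f \<circ> h) x)" if "g \<in> carrier G" for g x
  proof -
    have "\<tau> g \<in> carrier G"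
      using \<tau> that by blast
    then show ?thesis
      by (simp add: f h that)
  qed
  moreover have "\<sigma> \<circ> \<tau> \<in> carrier G \<rightarrow> carrier G"
    using \<sigma> \<tau> by auto
  ultimately show ?thesis
    unfolding weakly_invariant_iff_intertwines by blast
qed

lemma weakly_invariant_funpow:
  "weakly_invariant G \<Phi> f \<Longrightarrow> weakly_invariant G \<Phi> (f ^^ n)"
  by (induction n) (simp_all add: weakly_invariant_id weakly_invariant_comp)

end

lemma smooth_left_action_imp_left_action:
  assumes "lie_group G AG" and "smooth_left_action G AG AM \<Phi>"
  shows "left_action G \<Phi>"
  using assms unfolding lie_group_def smooth_left_action_def left_action_def left_action_axioms_def
  by blast

lemma additive_funpow:
  assumes "\<And>s t. \<phi> (s + t) = \<phi> s \<circ> \<phi> t" and "\<phi> 0 = id"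
  shows "\<phi> (real n * s) = \<phi> s ^^ n"
proof (induction n)
  case (Suc n)
  have "\<phi> (real (Suc n) * s) = \<phi> s \<circ> \<phi> (real n * s)"
    using assms(1)[of s "real n * s"] by (simp add: algebra_simps)
  with Suc show ?case by simp
qed (use assms(2) in simp)

lemma real_eq_multiple_of_small:
  fixes t \<epsilon> :: real
  assumes "\<epsilon> > 0"
  obtains n :: nat and s where "\<bar>s\<bar> < \<epsilon>" and "t = real n * s"
proof -
  obtain n :: nat where n: "\<bar>t\<bar> / \<epsilon> < real n"
    using reals_Archimedean2 by blast
  moreover have "\<bar>t\<bar> / \<epsilon> \<ge> 0"
    using assms by simp
  ultimately have "real n > 0"
    by linarith
  moreover have "\<bar>t / real n\<bar> < \<epsilon>"
    using n assms \<open>real n > 0\<close> by (simp add: divide_less_eq mult.commute)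
  ultimately show ?thesis
    using that[of "t / real n" n] by simp
qed

theorem lemma1:
  fixes G :: "('g::{t2_space, second_countable_topology}, 'z) monoid_scheme"
    and AG :: "('g set \<times> ('g \<Rightarrow> 'e::euclidean_space)) set"
    and AM :: "('m::{t2_space, second_countable_topology} set \<times> ('m \<Rightarrow> 'f::euclidean_space)) set"
    and \<Phi> :: "'g \<Rightarrow> 'm \<Rightarrow> 'm"
    and \<phi> :: "real \<Rightarrow> 'm \<Rightarrow> 'm"
  assumes "lie_group G AG"
    and "smooth_manifold AM"
    and "smooth_left_action G AG AM \<Phi>"
    and "is_flow AM \<phi>"
  shows "(\<forall>t. weakly_invariant G \<Phi> (\<phi> t)) \<longleftrightarrow>
         (\<exists>\<epsilon>>0. \<forall>t. -\<epsilon> < t \<and> t < \<epsilon> \<longrightarrow> weakly_invariant G \<Phi> (\<phi> t))"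
proof
  assume "\<forall>t. weakly_invariant G \<Phi> (\<phi> t)"
  then show "\<exists>\<epsilon>>0. \<forall>t. -\<epsilon> < t \<and> t < \<epsilon> \<longrightarrow> weakly_invariant G \<Phi> (\<phi> t)"
    by (intro exI[of _ 1]) auto
next
  assume "\<exists>\<epsilon>>0. \<forall>t. -\<epsilon> < t \<and> t < \<epsilon> \<longrightarrow> weakly_invariant G \<Phi> (\<phi> t)"
  then obtain \<epsilon> where "\<epsilon> > 0" and small: "\<And>s. \<bar>s\<bar> < \<epsilon> \<Longrightarrow> weakly_invariant G \<Phi> (\<phi> s)"
    by (metis abs_less_iff minus_less_iff)
  interpret left_action G \<Phi>
    using smooth_left_action_imp_left_action[OF assms(1,3)] .
  have \<phi>_multiple: "\<phi> (real n * s) = \<phi> s ^^ n" for n s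
    using assms(4) unfolding is_flow_def by (intro additive_funpow) auto
  show "\<forall>t. weakly_invariant G \<Phi> (\<phi> t)"
  proof
    fix t
    obtain n s where "\<bar>s\<bar> < \<epsilon>" and "t = real n * s"
      using real_eq_multiple_of_small[OF \<open>\<epsilon> > 0\<close>] .
    then show "weakly_invariant G \<Phi> (\<phi> t)"
      using \<phi>_multiple small weakly_invariant_funpow by metis
  qed
qed

end
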